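(* For $\ell\ge1$, let $\mathrm{EXACT}_2^\ell:\{0,1\}^{4\ell}\to\{0,1\}$ be defined by splitting the input $x$ into consecutive blocks $b_1,\dots,b_\ell$ of 4 bits each and setting $\mathrm{EXACT}_2^\ell(x_1,\dots,x_{4\ell})=1$ if and only if each block $b_i$ contains exactly two 1s. Then $Q_E(\mathrm{EXACT}_2^\ell)=2\ell$ and $D(\mathrm{EXACT}_2^\ell)=4\ell$.
   Context: $D(h)$ (exact classical query complexity / decision tree complexity) is the minimum depth of a decision tree computing $h$; a decision tree is a rooted binary tree whose internal vertices are labelled by input variables $x_i$ (query $x_i$, go to left child if $0$, right child if $1$) and whose leaves are labelled by output values $0$ or $1$; its depth is the maximum root-to-leaf path length. Quantum query model: a $t$-query quantum query algorithm on inputs $x\in\{0,1\}^m$ acts on a Hilbert space $\mathcal H_{\rm in}\otimes\mathcal H_{\rm work}\otimes\mathcal H_{\rm out}$, where $\mathcal H_{\rm in}$ has orthonormal basis $|0\rangle,\dots,|m\rangle$, $\mathcal H_{\rm work}$ is a finite-dimensional workspace of arbitrary size, and $\mathcal H_{\rm out}$ is one qubit. It is specified by input-independent unitaries $U_0,\dots,U_t$, and on input $x$ produces the state $U_tO_xU_{t-1}O_x\cdots O_xU_0|0\rangle$ ($t$ applications of $O_x$), where the oracle $O_x$ acts on $\mathcal H_{\rm in}$ by $|i\rangle\mapsto(-1)^{x_i}|i\rangle$ with the convention $x_0=0$ (and as the identity on the other registers). The output is obtained by measuring $\mathcal H_{\rm out}$ in the computational basis. The algorithm computes $h$ exactly if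 for every $x$ the output equals $h(x)$ with probability $1$. $Q_E(h)$ is the minimum $t$ such that some $t$-query quantum query algorithm computes $h$ exactly. *)

theory Defs
  imports Complex_Main
begin

text \<open>An input x in {0,1}^m is a bool list of length m; x_i (1 <= i <= m) is xs ! (i-1).
  A Boolean function h on m bits is a function on bool lists, only its values on
  lists of length m matter.\<close>

datatype dtree = Leaf bool | Node nat dtree dtree
  \<comment> \<open>Node i l r queries variable with list index i (i.e. x_(i+1)); left child if 0, right if 1\<close>

fun dt_eval :: "dtree \<Rightarrow> bool list \<Rightarrow> bool" where
  "dt_eval (Leaf b) xs = b"
| "dt_eval (Node i l r) xs = (if xs ! i then dt_eval r xs else dt_eval l xs)"

fun dt_depth :: "dtree \<Rightarrow> nat" where
  "dt_depth (Leaf b) = 0"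
| "dt_depth (Node i l r) = Suc (max (dt_depth l) (dt_depth r))"

fun dt_vars_ok :: "nat \<Rightarrow> dtree \<Rightarrow> bool" where
  "dt_vars_ok m (Leaf b) = True"
| "dt_vars_ok m (Node i l r) = (i < m \<and> dt_vars_ok m l \<and> dt_vars_ok m r)"

definition D :: "nat \<Rightarrow> (bool list \<Rightarrow> bool) \<Rightarrow> nat" where
  "D m h = (LEAST d. \<exists>t. dt_vars_ok m t \<and> dt_depth t = d \<and>
                        (\<forall>xs. length xs = m \<longrightarrow> dt_eval t xs = h xs))"

text \<open>Hilbert space H_in (x) H_work (x) H_out of dimension N = (m+1)*w*2, w >= 1 the workspace
  dimension. Basis state |i,j,b> (i <= m, j < w, b < 2) has index i*(2*w) + 2*j + b.
  Vectors are functions nat => complex (relevant on indices < N), operators are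
  N x N matrices given as functions nat => nat => complex.\<close>

definition qdim :: "nat \<Rightarrow> nat \<Rightarrow> nat" where
  "qdim m w = (m + 1) * w * 2"

definition mat_apply :: "nat \<Rightarrow> (nat \<Rightarrow> nat \<Rightarrow> complex) \<Rightarrow> (nat \<Rightarrow> complex) \<Rightarrow> (nat \<Rightarrow> complex)" where
  "mat_apply N U v = (\<lambda>i. if i < N then (\<Sum>j<N. U i j * v j) else 0)"

definition unitary_mat :: "nat \<Rightarrow> (nat \<Rightarrow> nat \<Rightarrow> complex) \<Rightarrow> bool" where
  "unitary_mat N U \<longleftrightarrow>
     (\<forall>i<N. \<forall>j<N. (\<Sum>k<N. cnj (U k i) * U k j) = (if i = j then 1 else 0))"

text \<open>Oracle O_x: |i,j,b> -> (-1)^(x_i) |i,j,b>, with x_0 = 0.\<close>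
definition oracle_apply :: "nat \<Rightarrow> bool list \<Rightarrow> (nat \<Rightarrow> complex) \<Rightarrow> (nat \<Rightarrow> complex)" where
  "oracle_apply w xs v = (\<lambda>s. let i = s div (2 * w) in
      if 1 \<le> i \<and> xs ! (i - 1) then - v s else v s)"

definition basis0 :: "nat \<Rightarrow> complex" where
  "basis0 = (\<lambda>s. if s = 0 then 1 else 0)"

fun qstate :: "nat \<Rightarrow> nat \<Rightarrow> (nat \<Rightarrow> nat \<Rightarrow> nat \<Rightarrow> complex) \<Rightarrow> bool list \<Rightarrow> nat \<Rightarrow> (nat \<Rightarrow> complex)" where
  "qstate m w U xs 0 = mat_apply (qdim m w) (U 0) basis0"
| "qstate m w U xs (Suc k) = mat_apply (qdim m w) (U (Suc k)) (oracle_apply w xs (qstate m w U xs k))"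

text \<open>Exact computation: measuring the output qubit (index bit s mod 2) yields h(x) with
  probability 1, i.e. all amplitudes with the wrong output bit vanish.\<close>
definition computes_exactly :: "nat \<Rightarrow> nat \<Rightarrow> nat \<Rightarrow> (nat \<Rightarrow> nat \<Rightarrow> nat \<Rightarrow> complex) \<Rightarrow> (bool list \<Rightarrow> bool) \<Rightarrow> bool" where
  "computes_exactly m w t U h \<longleftrightarrow>
     (\<forall>xs. length xs = m \<longrightarrow>
        (\<forall>s < qdim m w. (s mod 2 = 1) \<noteq> h xs \<longrightarrow> qstate m w U xs t s = 0))"

definition Q_E :: "nat \<Rightarrow> (bool list \<Rightarrow> bool) \<Rightarrow> nat" where
  "Q_E m h = (LEAST t. \<exists>w U. 0 < w \<and> (\<forall>k\<le>t. unitary_mat (qdim m w) (U k)) \<and>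
                              computes_exactly m w t U h)"

definition exact2 :: "nat \<Rightarrow> bool list \<Rightarrow> bool" where
  "exact2 l xs \<longleftrightarrow> (\<forall>i<l. length (filter id (take 4 (drop (4 * i) xs))) = 2)"

end

theory Submission
  imports Defs
begin

(* With a one-dimensional workspace the basis states are |i,b>,
   with index 2i+b.  The algorithm treats the blocks one after another, two queries per
   block.  For block r the five states |0,0>, |4r+1,0>, ..., |4r+4,0> carry a fixed
   five-dimensional gadget R O V O: applied to the uniform superposition over the four
   block positions it yields a unit multiple of |0,0> if the block contains exactly two
   ones, and a state orthogonal to |0,0> otherwise.  Amplitude moved away from |0,0> is
   never touched again, so an invariant (alg_inv below) tracks the state block by block; a
   final swap of |0,0> and |0,1> produces the answer.

   After k queries every amplitude is a
   multilinear polynomial of degree <= k in the +-1 variables, so the acceptance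
   probability of a t-query algorithm has degree <= 2t and is orthogonal to the full
   parity when 2t < m.  Every accepted input of EXACT_2^l has even weight 2l, so this
   correlation equals the (positive) number of accepted inputs; hence 2t >= 4l.

   The complete tree of depth m computes every function on m bits;
   conversely, an input at which every bit is sensitive (here 1100...1100) forces every
   correct tree to query all m variables along its path. *)


definition mat_mult :: "nat \<Rightarrow> (nat \<Rightarrow> nat \<Rightarrow> complex) \<Rightarrow> (nat \<Rightarrow> nat \<Rightarrow> complex) \<Rightarrow> nat \<Rightarrow> nat \<Rightarrow> complex" where
  "mat_mult N A B i j = (\<Sum>k<N. A i k * B k j)"

lemma mat_apply_mult: "mat_apply N (mat_mult N A B) v = mat_apply N A (mat_apply N B v)"
proof (rule ext)
  fix i
  have "(\<Sum>j<N. (\<Sum>k<N. A i k * B k j) * v j) = (\<Sum>j<N. \<Sum>k<N. A i k * B k j * v j)"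
    by (simp add: sum_distrib_right)
  also have "\<dots> = (\<Sum>k<N. \<Sum>j<N. A i k * B k j * v j)" by (rule sum.swap)
  also have "\<dots> = (\<Sum>k<N. A i k * (\<Sum>j<N. B k j * v j))"
    by (simp add: sum_distrib_left mult.assoc)
  finally show "mat_apply N (mat_mult N A B) v i = mat_apply N A (mat_apply N B v) i"
    by (simp add: mat_apply_def mat_mult_def)
qed

lemma unitary_mat_mult:
  assumes A: "unitary_mat N A" and B: "unitary_mat N B"
  shows "unitary_mat N (mat_mult N A B)"
  unfolding unitary_mat_def
proof (intro allI impI)
  fix i j assume i: "i < N" and j: "j < N"
  have "(\<Sum>k<N. cnj (mat_mult N A B k i) * mat_mult N A B k j)
      = (\<Sum>k<N. \<Sum>p<N. \<Sum>q<N. cnj (B p i) * B q j * (cnj (A k p) * A k q))"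
    by (simp add: mat_mult_def sum_distrib_left sum_distrib_right algebra_simps)
  also have "\<dots> = (\<Sum>p<N. \<Sum>q<N. \<Sum>k<N. cnj (B p i) * B q j * (cnj (A k p) * A k q))"
    by (subst sum.swap, rule sum.cong, simp, rule sum.swap)
  also have "\<dots> = (\<Sum>p<N. \<Sum>q<N. cnj (B p i) * B q j * (\<Sum>k<N. cnj (A k p) * A k q))"
    by (simp add: sum_distrib_left)
  also have "\<dots> = (\<Sum>p<N. \<Sum>q<N. if p = q then cnj (B p i) * B q j else 0)"
    by (rule sum.cong, simp, rule sum.cong) (use A in \<open>auto simp: unitary_mat_def\<close>)
  also have "\<dots> = (if i = j then 1 else 0)" using B i j by (simp add: unitary_mat_def)
  finally show "(\<Sum>k<N. cnj (mat_mult N A B k i) * mat_mult N A B k j) = (if i = j then 1 else 0)" .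
qed

text \<open>A d-by-d matrix M acting on the coordinates \<iota> 0, ..., \<iota> (d-1) (with left inverse
  \<pi>) and as the identity on all other coordinates.  Every unitary of the algorithm is of
  this form.\<close>

definition embed_mat :: "nat \<Rightarrow> (nat \<Rightarrow> nat) \<Rightarrow> (nat \<Rightarrow> nat) \<Rightarrow> (nat \<Rightarrow> nat \<Rightarrow> complex) \<Rightarrow> nat \<Rightarrow> nat \<Rightarrow> complex" where
  "embed_mat d \<iota> \<pi> M i j =
     (if i \<in> \<iota> ` {..<d} \<and> j \<in> \<iota> ` {..<d} then M (\<pi> i) (\<pi> j) else if i = j then 1 else 0)"

lemma mat_apply_embed:
  assumes inv: "\<And>a. a < d \<Longrightarrow> \<pi> (\<iota> a) = a" and bd: "\<And>a. a < d \<Longrightarrow> \<iota> a < N"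
  shows "mat_apply N (embed_mat d \<iota> \<pi> M) v s =
    (if s < N then (if s \<in> \<iota> ` {..<d} then (\<Sum>b<d. M (\<pi> s) b * v (\<iota> b)) else v s) else 0)"
proof (cases "s < N")
  case True
  let ?S = "\<iota> ` {..<d}" let ?E = "embed_mat d \<iota> \<pi> M"
  have inj: "inj_on \<iota> {..<d}" by (metis inj_on_inverseI inv lessThan_iff)
  show ?thesis
  proof (cases "s \<in> ?S")
    case sin: True
    have "(\<Sum>j<N. ?E s j * v j) = (\<Sum>j\<in>?S. ?E s j * v j)"
      by (rule sum.mono_neutral_right) (use bd sin in \<open>auto simp: embed_mat_def\<close>)
    also have "\<dots> = (\<Sum>b<d. ?E s (\<iota> b) * v (\<iota> b))"
      by (rule sum.reindex[OF inj, unfolded comp_def])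
    also have "\<dots> = (\<Sum>b<d. M (\<pi> s) b * v (\<iota> b))"
      by (rule sum.cong) (use sin inv in \<open>auto simp: embed_mat_def\<close>)
    finally show ?thesis using True sin by (simp add: mat_apply_def)
  next
    case sout: False
    have "(\<Sum>j<N. ?E s j * v j) = (\<Sum>j<N. if s = j then v j else 0)"
      by (rule sum.cong) (use sout in \<open>auto simp: embed_mat_def\<close>)
    then show ?thesis using True sout by (simp add: mat_apply_def)
  qed
qed (simp add: mat_apply_def)

lemma unitary_embed:
  assumes inv: "\<And>a. a < d \<Longrightarrow> \<pi> (\<iota> a) = a" and bd: "\<And>a. a < d \<Longrightarrow> \<iota> a < N"
    and U: "unitary_mat d M"
  shows "unitary_mat N (embed_mat d \<iota> \<pi> M)"
  unfolding unitary_mat_def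
proof (intro allI impI)
  fix i j assume i: "i < N" and j: "j < N"
  let ?S = "\<iota> ` {..<d}" let ?E = "embed_mat d \<iota> \<pi> M"
  have inj: "inj_on \<iota> {..<d}" by (metis inj_on_inverseI inv lessThan_iff)
  show "(\<Sum>k<N. cnj (?E k i) * ?E k j) = (if i = j then 1 else 0)"
  proof (cases "i \<in> ?S \<and> j \<in> ?S")
    case ijS: True
    have "(\<Sum>k<N. cnj (?E k i) * ?E k j) = (\<Sum>k\<in>?S. cnj (?E k i) * ?E k j)"
      by (rule sum.mono_neutral_right) (use bd ijS in \<open>auto simp: embed_mat_def\<close>)
    also have "\<dots> = (\<Sum>a<d. cnj (?E (\<iota> a) i) * ?E (\<iota> a) j)"
      by (rule sum.reindex[OF inj, unfolded comp_def])
    also have "\<dots> = (\<Sum>a<d. cnj (M a (\<pi> i)) * M a (\<pi> j))"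
      by (rule sum.cong) (use ijS inv in \<open>auto simp: embed_mat_def\<close>)
    also have "\<dots> = (if \<pi> i = \<pi> j then 1 else 0)"
      using U ijS inv unfolding unitary_mat_def by auto
    finally show ?thesis using ijS inv by auto
  next
    case False
    then consider "i \<notin> ?S" | "i \<in> ?S" "j \<notin> ?S" by blast
    then show ?thesis
    proof cases
      case 1
      have "(\<Sum>k<N. cnj (?E k i) * ?E k j) = (\<Sum>k<N. if k = i then ?E i j else 0)"
        by (rule sum.cong) (use 1 in \<open>auto simp: embed_mat_def\<close>)
      then show ?thesis using i 1 by (auto simp: embed_mat_def)
    next
      case 2
      have "(\<Sum>k<N. cnj (?E k i) * ?E k j) = (\<Sum>k<N. if k = j then cnj (?E j i) else 0)"
        by (rule sum.cong) (use 2 in \<open>auto simp: embed_mat_def\<close>)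
      then show ?thesis using j 2 by (auto simp: embed_mat_def)
    qed
  qed
qed

definition sqnorm :: "nat \<Rightarrow> (nat \<Rightarrow> complex) \<Rightarrow> complex" where
  "sqnorm N v = (\<Sum>i<N. v i * cnj (v i))"

lemma sqnorm_unitary:
  assumes U: "unitary_mat N U"
  shows "sqnorm N (mat_apply N U v) = sqnorm N v"
proof -
  have "sqnorm N (mat_apply N U v) = (\<Sum>i<N. \<Sum>k<N. \<Sum>j<N. v j * cnj (v k) * (cnj (U i k) * U i j))"
    by (simp add: sqnorm_def mat_apply_def sum_distrib_left sum_distrib_right algebra_simps)
  also have "\<dots> = (\<Sum>k<N. \<Sum>j<N. \<Sum>i<N. v j * cnj (v k) * (cnj (U i k) * U i j))"
    by (subst sum.swap, rule sum.cong, simp, rule sum.swap)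
  also have "\<dots> = (\<Sum>k<N. \<Sum>j<N. v j * cnj (v k) * (\<Sum>i<N. cnj (U i k) * U i j))"
    by (simp add: sum_distrib_left)
  also have "\<dots> = (\<Sum>k<N. \<Sum>j<N. if j = k then v j * cnj (v k) else 0)"
    by (rule sum.cong, simp, rule sum.cong) (use U in \<open>auto simp: unitary_mat_def\<close>)
  also have "\<dots> = sqnorm N v" by (simp add: sqnorm_def)
  finally show ?thesis .
qed

lemma sqnorm_oracle: "sqnorm N (oracle_apply w xs v) = sqnorm N v"
  unfolding sqnorm_def by (rule sum.cong) (auto simp: oracle_apply_def Let_def)

lemma sqnorm_qstate:
  assumes N: "0 < qdim m w" and U: "\<forall>k\<le>t. unitary_mat (qdim m w) (U k)" and k: "k \<le> t"
  shows "sqnorm (qdim m w) (qstate m w U xs k) = 1"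
  using k
proof (induction k)
  case 0
  have "sqnorm (qdim m w) basis0 = (\<Sum>i<qdim m w. if i = 0 then 1 else 0)"
    unfolding sqnorm_def by (rule sum.cong) (auto simp: basis0_def)
  then show ?case using N U sqnorm_unitary by simp
next
  case (Suc k)
  then show ?case using U sqnorm_unitary sqnorm_oracle by simp
qed


section \<open>The polynomial method\<close>

text \<open>Inputs are encoded as +-1 values; chi S is the character (parity) of the set S.\<close>

definition sigma :: "nat \<Rightarrow> bool list \<Rightarrow> complex" where
  "sigma i xs = (if xs ! i then -1 else 1)"

definition chi :: "nat set \<Rightarrow> bool list \<Rightarrow> complex" where
  "chi S xs = (\<Prod>i\<in>S. sigma i xs)"

abbreviation inputs :: "nat \<Rightarrow> bool list set" where
  "inputs m \<equiv> {xs. length xs = m}"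

text \<open>The complex span of the characters of at most t variables among the first m,
  i.e. the multilinear polynomials of degree at most t in the +-1 variables.\<close>

inductive_set lowdeg :: "nat \<Rightarrow> nat \<Rightarrow> (bool list \<Rightarrow> complex) set" for m t where
  chr: "finite S \<Longrightarrow> S \<subseteq> {..<m} \<Longrightarrow> card S \<le> t \<Longrightarrow> chi S \<in> lowdeg m t"
| zero: "(\<lambda>_. 0) \<in> lowdeg m t"
| add: "f \<in> lowdeg m t \<Longrightarrow> g \<in> lowdeg m t \<Longrightarrow> (\<lambda>x. f x + g x) \<in> lowdeg m t"
| smul: "f \<in> lowdeg m t \<Longrightarrow> (\<lambda>x. c * f x) \<in> lowdeg m t"

lemma sigma_sq: "sigma i x * sigma i x = 1"
  by (simp add: sigma_def)

lemma cnj_sigma: "cnj (sigma i x) = sigma i x"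
  by (simp add: sigma_def)

lemma cnj_chi: "cnj (chi S x) = chi S x"
  by (simp add: chi_def cnj_sigma)

lemma chi_sq: "chi S x * chi S x = 1"
  by (simp add: chi_def prod.distrib[symmetric] sigma_sq)

lemma chi_mult:
  assumes "finite S" "finite T"
  shows "chi S x * chi T x = chi ((S - T) \<union> (T - S)) x"
proof -
  have S: "chi S x = chi (S \<inter> T) x * chi (S - T) x"
    unfolding chi_def by (rule prod.Int_Diff[OF assms(1)])
  have T: "chi T x = chi (S \<inter> T) x * chi (T - S) x"
    unfolding chi_def using prod.Int_Diff[OF assms(2), of _ S] by (simp add: Int_commute)
  have D: "chi ((S - T) \<union> (T - S)) x = chi (S - T) x * chi (T - S) x"
    unfolding chi_def by (rule prod.union_disjoint) (use assms in auto)
  have "chi S x * chi T x = (chi (S \<inter> T) x * chi (S \<inter> T) x) * (chi (S - T) x * chi (T - S) x)"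
    by (simp add: S T algebra_simps)
  then show ?thesis by (simp add: chi_sq D)
qed

lemma lowdeg_mono: "f \<in> lowdeg m t \<Longrightarrow> t \<le> t' \<Longrightarrow> f \<in> lowdeg m t'"
  by (induction rule: lowdeg.induct) (auto intro: lowdeg.intros)

lemma lowdeg_const: "(\<lambda>_. c) \<in> lowdeg m t"
proof -
  have "(\<lambda>x. c * chi {} x) \<in> lowdeg m t" by (intro lowdeg.smul lowdeg.chr) auto
  then show ?thesis by (simp add: chi_def)
qed

lemma lowdeg_sum:
  "finite J \<Longrightarrow> (\<And>j. j \<in> J \<Longrightarrow> F j \<in> lowdeg m t) \<Longrightarrow> (\<lambda>x. \<Sum>j\<in>J. F j x) \<in> lowdeg m t"
proof (induction J rule: finite_induct)
  case empty then show ?case by (simp add: zero)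
next
  case (insert a J)
  then show ?case using add[of "F a" m t "\<lambda>x. \<Sum>j\<in>J. F j x"] by simp
qed

text \<open>Multiplying by one variable raises the degree by at most one; this is the effect
  of one oracle call on the amplitudes.\<close>

lemma lowdeg_sigma:
  assumes "i < m" and "f \<in> lowdeg m t"
  shows "(\<lambda>x. sigma i x * f x) \<in> lowdeg m (Suc t)"
  using assms(2)
proof (induction rule: lowdeg.induct)
  case (chr S)
  show ?case
  proof (cases "i \<in> S")
    case True
    have "chi S x = sigma i x * chi (S - {i}) x" for x
      unfolding chi_def by (rule prod.remove[OF chr(1) True])
    then have e: "(\<lambda>x. sigma i x * chi S x) = chi (S - {i})"
      by (simp add: mult.assoc[symmetric] sigma_sq)
    have "card (S - {i}) \<le> Suc t" using chr card_Diff1_le[of S i] by simp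
    then show ?thesis unfolding e by (intro lowdeg.chr) (use chr in auto)
  next
    case False
    have e: "(\<lambda>x. sigma i x * chi S x) = chi (insert i S)"
      unfolding chi_def using chr(1) False by simp
    have "card (insert i S) \<le> Suc t" using chr False by simp
    then show ?thesis unfolding e by (intro lowdeg.chr) (use chr assms in auto)
  qed
next
  case zero then show ?case by (simp add: lowdeg.zero)
next
  case (add f g)
  then show ?case using lowdeg.add[OF add.IH] by (simp add: distrib_left)
next
  case (smul f c)
  then show ?case using lowdeg.smul[OF smul.IH, of c] by (simp add: algebra_simps)
qed

text \<open>A non-trivial character sums to zero over the hypercube: flipping a variable in
  its support is an involution that negates it.\<close>

lemma sum_chi_zero:
  assumes R: "finite R" "i \<in> R" "i < m"
  shows "(\<Sum>xs\<in>inputs m. chi R xs) = 0"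
proof -
  define flip where "flip xs = xs[i := \<not> xs ! i]" for xs :: "bool list"
  have chi_flip: "chi R (flip xs) = - chi R xs" if "length xs = m" for xs
  proof -
    have rem: "chi R ys = sigma i ys * chi (R - {i}) ys" for ys
      unfolding chi_def by (rule prod.remove[OF R(1,2)])
    have "chi (R - {i}) (flip xs) = chi (R - {i}) xs"
      unfolding chi_def by (rule prod.cong) (auto simp: sigma_def flip_def)
    moreover have "sigma i (flip xs) = - sigma i xs" using that R by (simp add: sigma_def flip_def)
    ultimately show ?thesis by (simp add: rem[of xs] rem[of "flip xs"])
  qed
  have "(\<Sum>xs\<in>inputs m. chi R xs) = (\<Sum>xs\<in>inputs m. chi R (flip xs))"
    by (rule sum.reindex_bij_witness[of _ flip flip]) (use R in \<open>auto simp: flip_def\<close>)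
  also have "\<dots> = - (\<Sum>xs\<in>inputs m. chi R xs)" by (simp add: chi_flip sum_negf)
  finally show ?thesis by simp
qed

lemma orth_chi_chi:
  assumes "finite S" "S \<subseteq> {..<m}" "card S \<le> t" "finite T" "T \<subseteq> {..<m}" "card T \<le> t" "2*t < m"
  shows "(\<Sum>xs\<in>inputs m. chi S xs * cnj (chi T xs) * chi {..<m} xs) = 0"
proof -
  let ?D = "(S - T) \<union> (T - S)"
  have fD: "finite ?D" using assms by auto
  have "card ?D \<le> card (S \<union> T)" by (rule card_mono) (use assms in auto)
  also have "\<dots> \<le> card S + card T" by (rule card_Un_le)
  finally have "card ?D < card {..<m}" using assms by simp
  then obtain i where i: "i \<in> {..<m}" "i \<notin> ?D"
    by (metis card_mono fD subsetI not_le)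
  let ?R = "(?D - {..<m}) \<union> ({..<m} - ?D)"
  have e: "chi S xs * cnj (chi T xs) * chi {..<m} xs = chi ?R xs" for xs
    using assms fD by (simp add: cnj_chi chi_mult)
  show ?thesis unfolding e
    by (rule sum_chi_zero[of _ i]) (use i fD in auto)
qed

lemma orth_chi_lowdeg:
  assumes "2*t < m" and "g \<in> lowdeg m t" and "finite S" "S \<subseteq> {..<m}" "card S \<le> t"
  shows "(\<Sum>xs\<in>inputs m. chi S xs * cnj (g xs) * chi {..<m} xs) = 0"
  using assms(2)
proof (induction rule: lowdeg.induct)
  case (chr T) then show ?case using orth_chi_chi[of S m t T] assms by simp
next
  case zero then show ?case by simp
next
  case (add f g)
  then show ?case by (simp add: distrib_left distrib_right sum.distrib)
next
  case (smul f c)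
  have "(\<Sum>xs\<in>inputs m. chi S xs * cnj (c * f xs) * chi {..<m} xs)
      = cnj c * (\<Sum>xs\<in>inputs m. chi S xs * cnj (f xs) * chi {..<m} xs)"
    by (simp add: sum_distrib_left algebra_simps)
  then show ?case using smul by simp
qed

lemma orth_lowdeg:
  assumes "2*t < m" and g: "g \<in> lowdeg m t" and f: "f \<in> lowdeg m t"
  shows "(\<Sum>xs\<in>inputs m. f xs * cnj (g xs) * chi {..<m} xs) = 0"
  using f
proof (induction rule: lowdeg.induct)
  case (chr S) then show ?case using orth_chi_lowdeg[OF assms(1) g] by simp
next
  case zero then show ?case by simp
next
  case (add f h)
  then show ?case by (simp add: distrib_left distrib_right sum.distrib)
next
  case (smul f c)
  have "(\<Sum>xs\<in>inputs m. c * f xs * cnj (g xs) * chi {..<m} xs)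
      = c * (\<Sum>xs\<in>inputs m. f xs * cnj (g xs) * chi {..<m} xs)"
    by (simp add: sum_distrib_left algebra_simps)
  then show ?case using smul by simp
qed

lemma oracle_apply_sigma:
  assumes j: "j < qdim m w" and w: "0 < w"
  shows "oracle_apply w xs v j = (if 1 \<le> j div (2*w) then sigma (j div (2*w) - 1) xs else 1) * v j"
    and "1 \<le> j div (2*w) \<Longrightarrow> j div (2*w) - 1 < m"
proof -
  have "j < (m+1) * (2*w)" using j by (simp add: qdim_def mult.commute mult.left_commute)
  then have "j div (2*w) < m + 1" using w by (simp add: less_mult_imp_div_less)
  then show "oracle_apply w xs v j = (if 1 \<le> j div (2*w) then sigma (j div (2*w) - 1) xs else 1) * v j"
    and "1 \<le> j div (2*w) \<Longrightarrow> j div (2*w) - 1 < m"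
    by (auto simp: oracle_apply_def sigma_def Let_def)
qed

lemma qstate_lowdeg:
  assumes w: "0 < w"
  shows "(\<lambda>xs. qstate m w U xs k s) \<in> lowdeg m k"
proof (induction k arbitrary: s)
  case 0
  show ?case by (simp add: lowdeg_const)
next
  case (Suc k)
  let ?N = "qdim m w"
  have queried: "(\<lambda>xs. oracle_apply w xs (qstate m w U xs k) j) \<in> lowdeg m (Suc k)"
    if j: "j < ?N" for j
  proof (cases "1 \<le> j div (2*w)")
    case True
    then show ?thesis
      using lowdeg_sigma[OF _ Suc.IH] oracle_apply_sigma[OF j w] by simp
  next
    case False
    then show ?thesis
      using lowdeg_mono[OF Suc.IH] oracle_apply_sigma[OF j w] by simp
  qed
  have "(\<lambda>xs. \<Sum>j<?N. U (Suc k) s j * oracle_apply w xs (qstate m w U xs k) j) \<in> lowdeg m (Suc k)"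
    by (intro lowdeg_sum lowdeg.smul queried) auto
  then show ?case by (cases "s < ?N") (simp_all add: mat_apply_def lowdeg.zero)
qed

definition accept_prob :: "nat \<Rightarrow> nat \<Rightarrow> nat \<Rightarrow> (nat \<Rightarrow> nat \<Rightarrow> nat \<Rightarrow> complex) \<Rightarrow> bool list \<Rightarrow> complex" where
  "accept_prob m w t U xs =
     (\<Sum>s\<in>{s. s < qdim m w \<and> odd s}. qstate m w U xs t s * cnj (qstate m w U xs t s))"

lemma accept_prob_exact:
  assumes w: "0 < w" and U: "\<forall>k\<le>t. unitary_mat (qdim m w) (U k)"
    and C: "computes_exactly m w t U h" and len: "length xs = m"
  shows "accept_prob m w t U xs = (if h xs then 1 else 0)"
proof (cases "h xs")
  case True
  let ?a = "qstate m w U xs t"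
  have "accept_prob m w t U xs = (\<Sum>s<qdim m w. ?a s * cnj (?a s))"
    unfolding accept_prob_def
    by (rule sum.mono_neutral_left) (use C len True in \<open>auto simp: computes_exactly_def\<close>)
  also have "\<dots> = 1"
    using sqnorm_qstate[OF _ U order_refl] w by (simp add: sqnorm_def qdim_def)
  finally show ?thesis using True by simp
next
  case False
  then show ?thesis
    using C len by (auto simp: accept_prob_def computes_exactly_def odd_iff_mod_2_eq_one intro!: sum.neutral)
qed

text \<open>The acceptance probability has degree at most 2t, hence is orthogonal to parity.\<close>

lemma accept_prob_parity:
  assumes w: "0 < w" and tm: "2*t < m"
  shows "(\<Sum>xs\<in>inputs m. accept_prob m w t U xs * chi {..<m} xs) = 0"
proof -
  let ?Od = "{s. s < qdim m w \<and> odd s}"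
  let ?a = "\<lambda>xs s. qstate m w U xs t s"
  have "(\<Sum>xs\<in>inputs m. accept_prob m w t U xs * chi {..<m} xs)
      = (\<Sum>s\<in>?Od. \<Sum>xs\<in>inputs m. ?a xs s * cnj (?a xs s) * chi {..<m} xs)"
    by (simp add: accept_prob_def sum.swap[of _ ?Od] sum_distrib_right)
  also have "\<dots> = 0"
    using orth_lowdeg[OF tm qstate_lowdeg[OF w] qstate_lowdeg[OF w]] by simp
  finally show ?thesis .
qed

lemma exact_algorithm_parity:
  assumes w: "0 < w" and U: "\<forall>k\<le>t. unitary_mat (qdim m w) (U k)"
    and C: "computes_exactly m w t U h" and tm: "2*t < m"
  shows "(\<Sum>xs\<in>inputs m. if h xs then chi {..<m} xs else 0) = 0"
proof -
  have "(\<Sum>xs\<in>inputs m. if h xs then chi {..<m} xs else 0)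
      = (\<Sum>xs\<in>inputs m. accept_prob m w t U xs * chi {..<m} xs)"
    by (rule sum.cong) (simp_all add: accept_prob_exact[OF w U C])
  then show ?thesis using accept_prob_parity[OF w tm] by simp
qed

section \<open>Decision trees\<close>

text \<open>The complete decision tree queries the variables in order and stores h at the
  leaves; after the prefix pre has been read, n further levels remain.\<close>

fun full_tree :: "(bool list \<Rightarrow> bool) \<Rightarrow> nat \<Rightarrow> bool list \<Rightarrow> dtree" where
  "full_tree h 0 pre = Leaf (h pre)"
| "full_tree h (Suc n) pre =
     Node (length pre) (full_tree h n (pre @ [False])) (full_tree h n (pre @ [True]))"

lemma full_tree_depth: "dt_depth (full_tree h n pre) = n"
  by (induction n arbitrary: pre) auto

lemma full_tree_vars_ok: "dt_vars_ok (length pre + n) (full_tree h n pre)"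
proof (induction n arbitrary: pre)
  case 0 then show ?case by simp
next
  case (Suc n)
  have "dt_vars_ok (length (pre @ [b]) + n) (full_tree h n (pre @ [b]))" for b by (rule Suc.IH)
  then show ?case by simp
qed

lemma full_tree_eval:
  "length xs = length pre + n \<Longrightarrow> take (length pre) xs = pre \<Longrightarrow> dt_eval (full_tree h n pre) xs = h xs"
proof (induction n arbitrary: pre)
  case 0 then show ?case by simp
next
  case (Suc n)
  let ?pre' = "pre @ [xs ! length pre]"
  have "length pre < length xs" using Suc.prems by simp
  then have "take (length ?pre') xs = ?pre'"
    using take_Suc_conv_app_nth[of "length pre" xs] Suc.prems by simp
  then have "dt_eval (full_tree h n ?pre') xs = h xs"
    using Suc.IH[of ?pre'] Suc.prems(1) by simp
  then show ?case by (cases "xs ! length pre") simp_all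
qed

fun query_path :: "dtree \<Rightarrow> bool list \<Rightarrow> nat list" where
  "query_path (Leaf b) xs = []"
| "query_path (Node i l r) xs = i # (if xs ! i then query_path r xs else query_path l xs)"

lemma query_path_length: "length (query_path t xs) \<le> dt_depth t"
  by (induction t) auto

lemma dt_eval_update_unqueried:
  "i \<notin> set (query_path t xs) \<Longrightarrow> dt_eval t (xs[i := b]) = dt_eval t xs"
  by (induction t) auto

lemma depth_ge_full_sensitivity:
  assumes eval: "\<forall>xs. length xs = m \<longrightarrow> dt_eval t xs = h xs"
    and x: "length x = m" and sens: "\<And>i. i < m \<Longrightarrow> h (x[i := \<not> x ! i]) \<noteq> h x"
  shows "m \<le> dt_depth t"
proof -
  have all_queried: "{..<m} \<subseteq> set (query_path t x)"
  proof
    fix i assume "i \<in> {..<m}"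
    then have i: "i < m" by simp
    show "i \<in> set (query_path t x)"
    proof (rule ccontr)
      assume "i \<notin> set (query_path t x)"
      then have "dt_eval t (x[i := \<not> x ! i]) = dt_eval t x" by (rule dt_eval_update_unqueried)
      then show False using eval x sens[OF i] by simp
    qed
  qed
  have "m = card {..<m}" by simp
  also have "\<dots> \<le> card (set (query_path t x))" by (rule card_mono) (use all_queried in auto)
  also have "\<dots> \<le> length (query_path t x)" by (rule card_length)
  also have "\<dots> \<le> dt_depth t" by (rule query_path_length)
  finally show ?thesis .
qed

lemma D_full_sensitivity:
  assumes x: "length x = m" and sens: "\<And>i. i < m \<Longrightarrow> h (x[i := \<not> x ! i]) \<noteq> h x"
  shows "D m h = m"
  unfolding D_def
proof (rule Least_equality)
  show "\<exists>t. dt_vars_ok m t \<and> dt_depth t = m \<and> (\<forall>xs. length xs = m \<longrightarrow> dt_eval t xs = h xs)"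
    using full_tree_vars_ok[of "[]" m h] full_tree_depth[of h m "[]"] full_tree_eval[of _ "[]" m h]
    by (intro exI[of _ "full_tree h m []"]) auto
next
  fix d assume "\<exists>t. dt_vars_ok m t \<and> dt_depth t = d \<and> (\<forall>xs. length xs = m \<longrightarrow> dt_eval t xs = h xs)"
  then show "m \<le> d" using depth_ge_full_sensitivity[OF _ x sens] by blast
qed

lemma take4:
  "k + 4 \<le> length xs \<Longrightarrow> take 4 (drop k xs) = [xs!k, xs!(k+1), xs!(k+2), xs!(k+3)]"
  by (rule nth_equalityI) (auto simp: less_Suc_eq numeral_eq_Suc add.commute)

lemma weight_blocks:
  "length xs = 4*l \<Longrightarrow> length (filter id xs) = (\<Sum>i<l. length (filter id (take 4 (drop (4*i) xs))))"
proof (induction l arbitrary: xs)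
  case 0 then show ?case by simp
next
  case (Suc l)
  let ?ys = "take (4*l) xs" let ?zs = "drop (4*l) xs"
  have "length (filter id xs) = length (filter id ?ys) + length (filter id ?zs)"
    by (metis append_take_drop_id filter_append length_append)
  also have "length (filter id ?ys) = (\<Sum>i<l. length (filter id (take 4 (drop (4*i) ?ys))))"
    by (rule Suc.IH) (use Suc.prems in simp)
  also have "\<dots> = (\<Sum>i<l. length (filter id (take 4 (drop (4*i) xs))))"
  proof (rule sum.cong)
    fix i assume "i \<in> {..<l}"
    then have "min 4 (4*l - 4*i) = 4" by auto
    then show "length (filter id (take 4 (drop (4*i) ?ys))) = length (filter id (take 4 (drop (4*i) xs)))"
      by (simp add: drop_take take_take)
  qed simp
  also have "?zs = take 4 (drop (4*l) xs)" using Suc.prems by simp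
  finally show ?case by simp
qed

lemma chi_weight: "chi {..<length xs} xs = (-1) ^ length (filter id xs)"
proof (induction xs)
  case Nil then show ?case by (simp add: chi_def)
next
  case (Cons b xs)
  have "chi {..<length (b # xs)} (b # xs) = sigma 0 (b # xs) * (\<Prod>i<length xs. sigma (Suc i) (b # xs))"
    unfolding chi_def by (simp add: prod.lessThan_Suc_shift del: prod.lessThan_Suc)
  also have "(\<Prod>i<length xs. sigma (Suc i) (b # xs)) = chi {..<length xs} xs"
    by (simp add: chi_def sigma_def)
  finally show ?case using Cons by (simp add: sigma_def)
qed

text \<open>Every accepted input has weight 2l, hence even parity.\<close>

lemma exact2_parity: "length xs = 4*l \<Longrightarrow> exact2 l xs \<Longrightarrow> chi {..<4*l} xs = 1"
proof -
  assume len: "length xs = 4*l" and ex: "exact2 l xs"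
  have "length (filter id xs) = 2*l"
    using weight_blocks[OF len] ex by (simp add: exact2_def)
  then show ?thesis using chi_weight[of xs] len by (simp add: power_mult)
qed

definition balanced_input :: "nat \<Rightarrow> bool list" where
  "balanced_input l = map (\<lambda>j. j mod 4 < 2) [0..<4*l]"

lemma balanced_input_length: "length (balanced_input l) = 4*l"
  by (simp add: balanced_input_def)

lemma balanced_input_block:
  assumes i: "i < l"
  shows "take 4 (drop (4*i) (balanced_input l)) = [True, True, False, False]"
proof -
  have "take 4 (drop (4*i) (balanced_input l)) = [balanced_input l ! (4*i),
      balanced_input l ! (4*i+1), balanced_input l ! (4*i+2), balanced_input l ! (4*i+3)]"
    by (rule take4) (use i in \<open>simp add: balanced_input_length\<close>)
  moreover have "4*i+3 < 4*l" using i by simp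
  ultimately show ?thesis by (simp add: balanced_input_def nth_append mod_Suc del: upt_Suc)
qed

lemma exact2_balanced_input: "exact2 l (balanced_input l)"
  by (simp add: exact2_def balanced_input_block)

lemma balanced_input_sensitive:
  assumes i: "i < 4*l"
  shows "\<not> exact2 l ((balanced_input l)[i := \<not> balanced_input l ! i])"
proof
  let ?x = "balanced_input l" let ?x1 = "?x[i := \<not> ?x ! i]"
  assume ex: "exact2 l ?x1"
  define c where "c = i div 4"
  define d where "d = i mod 4"
  have i': "i = 4*c + d" "d < 4" by (simp_all add: c_def d_def)
  have cl: "c < l" using i by (simp add: c_def)
  define f where "f e = (if e = d then \<not> (e < (2::nat)) else e < 2)" for e
  have nth1: "?x1 ! (4*c+e) = f e" if "e < 4" for e
  proof -
    have lt: "4*c+e < 4*l" using that cl by simp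
    then have "?x1 ! (4*c+e) = (if i = 4*c+e then \<not> ?x ! i else ?x ! (4*c+e))"
      by (simp add: balanced_input_length nth_list_update)
    also have "\<dots> = f e" using i' lt that by (auto simp: f_def balanced_input_def)
    finally show ?thesis .
  qed
  have "take 4 (drop (4*c) ?x1) = [?x1!(4*c), ?x1!(4*c+1), ?x1!(4*c+2), ?x1!(4*c+3)]"
    by (rule take4) (use cl in \<open>simp add: balanced_input_length\<close>)
  also have "\<dots> = [f 0, f 1, f 2, f 3]" using nth1[of 0] nth1[of 1] nth1[of 2] nth1[of 3] by simp
  finally have "length (filter id [f 0, f 1, f 2, f 3]) = 2"
    using ex cl unfolding exact2_def by metis
  moreover have "d = 0 \<or> d = 1 \<or> d = 2 \<or> d = 3" using i'(2) by auto
  ultimately show False by (auto simp: f_def)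
qed

text \<open>The quantum lower bound: EXACT_2 is positively correlated with parity.\<close>

lemma exact2_query_lower_bound:
  assumes w: "0 < w" and U: "\<forall>k\<le>t. unitary_mat (qdim (4*l) w) (U k)"
    and C: "computes_exactly (4*l) w t U (exact2 l)"
  shows "2*l \<le> t"
proof (rule ccontr)
  let ?A = "{xs \<in> inputs (4*l). exact2 l xs}"
  assume "\<not> 2*l \<le> t"
  then have "(\<Sum>xs\<in>inputs (4*l). if exact2 l xs then chi {..<4*l} xs else 0) = 0"
    by (intro exact_algorithm_parity[OF w U C]) simp
  also have "(\<Sum>xs\<in>inputs (4*l). if exact2 l xs then chi {..<4*l} xs else 0) = of_nat (card ?A)"
    using finite_lists_length_eq[of "UNIV :: bool set" "4*l"]
    by (simp add: exact2_parity sum.If_cases Int_def cong: if_cong)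
  finally have "card ?A = 0" by simp
  moreover have "finite ?A" using finite_lists_length_eq[of "UNIV :: bool set" "4*l"] by simp
  moreover have "balanced_input l \<in> ?A"
    using balanced_input_length exact2_balanced_input by simp
  ultimately show False by auto
qed

section \<open>The five-dimensional gadget for one block\<close>

text \<open>Coordinate 0 of the gadget is the state |0,0>, coordinates 1..4 are the four
  positions of a block.  The block bits are y 1, ..., y 4; the oracle multiplies
  coordinate a > 0 by (-1)^(y a).  With omega a primitive cube root of unity, V is the
  unitary below, R maps coordinate 0 to the uniform superposition of 1..4, and the
  gadget is R O V O applied to that uniform superposition.\<close>

definition omega :: complex where
  "omega = Complex (-1/2) (sqrt 3 / 2)"

definition gadget_V :: "nat \<Rightarrow> nat \<Rightarrow> complex" where
  "gadget_V a b =
     [[0, 1/2, 1/2, 1/2, 1/2],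
      [1/2, 0, 1/2, omega/2, cnj omega/2],
      [1/2, 1/2, 0, cnj omega/2, omega/2],
      [1/2, omega/2, cnj omega/2, 0, 1/2],
      [1/2, cnj omega/2, omega/2, 1/2, 0]] ! a ! b"

definition gadget_R :: "nat \<Rightarrow> nat \<Rightarrow> complex" where
  "gadget_R a b = (if a = 0 \<and> b = 0 then 0 else if a = 0 \<or> b = 0 then 1/2
                   else if a = b then 3/4 else -1/4)"

definition swap_mat :: "nat \<Rightarrow> nat \<Rightarrow> complex" where
  "swap_mat a b = (if a = b then 0 else 1)"

lemma sqrt3_sq: "sqrt 3 * sqrt 3 = (3::real)"
  by simp

lemma unitary_gadget_V: "unitary_mat 5 gadget_V"
  unfolding unitary_mat_def
  by (auto simp: numeral_eq_Suc lessThan_Suc gadget_V_def less_Suc_eq omega_def complex_eq_iff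
      field_simps sqrt3_sq)

lemma unitary_gadget_R: "unitary_mat 5 gadget_R"
  unfolding unitary_mat_def by (auto simp: numeral_eq_Suc lessThan_Suc gadget_R_def less_Suc_eq)

lemma unitary_swap_mat: "unitary_mat 2 swap_mat"
  unfolding unitary_mat_def by (auto simp: numeral_eq_Suc lessThan_Suc swap_mat_def less_Suc_eq)

definition sg :: "bool \<Rightarrow> complex" where
  "sg b = (if b then -1 else 1)"

definition gadget_VO :: "(nat \<Rightarrow> bool) \<Rightarrow> nat \<Rightarrow> complex" where
  "gadget_VO y a = (\<Sum>b<5. gadget_V a b * (if b = 0 then 0 else sg (y b) / 2))"

definition gadget_OVO :: "(nat \<Rightarrow> bool) \<Rightarrow> nat \<Rightarrow> complex" where
  "gadget_OVO y a = (if a = 0 then 1 else sg (y a)) * gadget_VO y a"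

definition gadget_out :: "(nat \<Rightarrow> bool) \<Rightarrow> nat \<Rightarrow> complex" where
  "gadget_out y a = (\<Sum>b<5. gadget_R a b * gadget_OVO y b)"

text \<open>The two facts the algorithm relies on, checked over all 16 blocks: a bad block
  sends no amplitude to |0,0>, a good block sends all of it there.\<close>

lemma gadget_out_bad:
  "length (filter id [y 1, y 2, y 3, y 4]) \<noteq> 2 \<Longrightarrow> gadget_out y 0 = 0"
  by (cases "y 1"; cases "y 2"; cases "y 3"; cases "y 4")
     (simp_all add: gadget_out_def gadget_OVO_def gadget_VO_def numeral_eq_Suc lessThan_Suc
       gadget_V_def gadget_R_def sg_def omega_def complex_eq_iff field_simps sqrt3_sq)

lemma gadget_out_good:
  "length (filter id [y 1, y 2, y 3, y 4]) = 2 \<Longrightarrow> 0 < a \<Longrightarrow> a < 5 \<Longrightarrow> gadget_out y a = 0"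
  by (cases "y 1"; cases "y 2"; cases "y 3"; cases "y 4")
     (auto simp: gadget_out_def gadget_OVO_def gadget_VO_def numeral_eq_Suc lessThan_Suc
       gadget_V_def gadget_R_def sg_def omega_def complex_eq_iff field_simps sqrt3_sq less_Suc_eq)

section \<open>An exact 2l-query algorithm for EXACT_2\<close>

text \<open>Throughout, the workspace has dimension one, so the basis state |i,b> has index
  2i+b and the dimension is qdim (4l) 1 = 2(4l+1).  Since the numeral 1 appears as this
  workspace dimension, it must not be rewritten to Suc 0 here.\<close>

context
begin

declare One_nat_def [simp del]

text \<open>Gadget coordinate a of block r sits at index blk_idx r a: coordinate 0 is |0,0>,
  coordinate a > 0 is |4r+a,0>.  block_pos r are the indices of the four positions of
  block r, earlier_pos r those of all previous blocks.\<close>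

definition blk_idx :: "nat \<Rightarrow> nat \<Rightarrow> nat" where
  "blk_idx r a = (if a = 0 then 0 else 2*(4*r+a))"

definition blk_coord :: "nat \<Rightarrow> nat \<Rightarrow> nat" where
  "blk_coord r s = (if s = 0 then 0 else s div 2 - 4*r)"

definition block_pos :: "nat \<Rightarrow> nat set" where
  "block_pos r = {s. even s \<and> 4*r+1 \<le> s div 2 \<and> s div 2 \<le> 4*r+4}"

definition earlier_pos :: "nat \<Rightarrow> nat set" where
  "earlier_pos r = {s. even s \<and> 1 \<le> s div 2 \<and> s div 2 \<le> 4*r}"

definition block_uniform :: "nat \<Rightarrow> nat \<Rightarrow> complex" where
  "block_uniform r s = (if s \<in> block_pos r then 1/2 else 0)"

definition block_bits :: "nat \<Rightarrow> bool list \<Rightarrow> nat \<Rightarrow> bool" where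
  "block_bits r xs b = xs ! (4*r + b - 1)"

definition oracle_sign :: "bool list \<Rightarrow> nat \<Rightarrow> complex" where
  "oracle_sign xs s = (if 1 \<le> s div 2 \<and> xs ! (s div 2 - 1) then -1 else 1)"

lemma blk_coord_idx: "blk_coord r (blk_idx r a) = a"
  by (simp add: blk_idx_def blk_coord_def)

lemma blk_idx_bound: "r < l \<Longrightarrow> a < 5 \<Longrightarrow> blk_idx r a < qdim (4*l) 1"
  by (simp add: blk_idx_def qdim_def)

lemma blk_idx_image: "s \<in> blk_idx r ` {..<5} \<longleftrightarrow> s = 0 \<or> s \<in> block_pos r"
proof
  assume "s \<in> blk_idx r ` {..<5}"
  then show "s = 0 \<or> s \<in> block_pos r" by (auto simp: blk_idx_def block_pos_def)
next
  assume "s = 0 \<or> s \<in> block_pos r"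
  then have "s = blk_idx r (blk_coord r s) \<and> blk_coord r s < 5"
    by (auto simp: blk_idx_def blk_coord_def block_pos_def)
  then show "s \<in> blk_idx r ` {..<5}" by (metis imageI lessThan_iff)
qed

lemma blk_idx_coord: "s \<in> block_pos r \<Longrightarrow> blk_idx r (blk_coord r s) = s \<and> 0 < blk_coord r s \<and> blk_coord r s < 5"
  by (auto simp: blk_idx_def blk_coord_def block_pos_def)

lemma blk_idx_block_pos: "0 < a \<Longrightarrow> a < 5 \<Longrightarrow> blk_idx r a \<in> block_pos r"
  by (auto simp: blk_idx_def block_pos_def)

lemma block_pos_not_earlier: "s \<in> block_pos r \<Longrightarrow> s \<notin> earlier_pos r"
  by (auto simp: block_pos_def earlier_pos_def)

lemma earlier_pos_Suc: "s \<in> block_pos r \<or> s \<in> earlier_pos r \<Longrightarrow> s \<in> earlier_pos (Suc r)"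
  by (auto simp: block_pos_def earlier_pos_def)

lemma earlier_pos_bound: "s \<in> earlier_pos r \<Longrightarrow> r \<le> l \<Longrightarrow> s < qdim (4*l) 1"
  by (auto simp: earlier_pos_def qdim_def)

lemma block_pos_bound: "s \<in> block_pos r \<Longrightarrow> r < l \<Longrightarrow> s < qdim (4*l) 1"
  by (auto simp: block_pos_def qdim_def)

lemma output_pos_not_block: "0 \<notin> earlier_pos r" "1 \<notin> earlier_pos r" "0 \<notin> block_pos r" "1 \<notin> block_pos r"
  by (auto simp: earlier_pos_def block_pos_def)

lemma oracle_sign_sq: "oracle_sign xs s * oracle_sign xs s = 1"
  by (simp add: oracle_sign_def)

lemma oracle_sign_blk_idx: "oracle_sign xs (blk_idx r a) = (if a = 0 then 1 else sg (block_bits r xs a))"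
  by (simp add: oracle_sign_def blk_idx_def sg_def block_bits_def)

lemma oracle_apply_sign: "oracle_apply 1 xs v s = oracle_sign xs s * v s"
  by (simp add: oracle_apply_def oracle_sign_def Let_def)

text \<open>The
  algorithm applies R_at 0 first, then V_at r after query 2r+1 and
  next_R l (r+1) R_at r after query 2r+2.\<close>

definition R_at :: "nat \<Rightarrow> nat \<Rightarrow> nat \<Rightarrow> complex" where
  "R_at r = embed_mat 5 (blk_idx r) (blk_coord r) gadget_R"

definition V_at :: "nat \<Rightarrow> nat \<Rightarrow> nat \<Rightarrow> complex" where
  "V_at r = embed_mat 5 (blk_idx r) (blk_coord r) gadget_V"

definition swap_out :: "nat \<Rightarrow> nat \<Rightarrow> complex" where
  "swap_out = embed_mat 2 id id swap_mat"

definition next_R :: "nat \<Rightarrow> nat \<Rightarrow> nat \<Rightarrow> nat \<Rightarrow> complex" where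
  "next_R l r = (if r < l then R_at r else swap_out)"

definition alg :: "nat \<Rightarrow> nat \<Rightarrow> nat \<Rightarrow> nat \<Rightarrow> complex" where
  "alg l k = (if k = 0 then R_at 0 else if odd k then V_at (k div 2)
      else mat_mult (qdim (4*l) 1) (next_R l (k div 2)) (R_at (k div 2 - 1)))"

lemma mat_apply_at_block:
  assumes "r < l"
  shows "mat_apply (qdim (4*l) 1) (embed_mat 5 (blk_idx r) (blk_coord r) M) v s =
    (if s < qdim (4*l) 1 then (if s = 0 \<or> s \<in> block_pos r
       then (\<Sum>b<5. M (blk_coord r s) b * v (blk_idx r b)) else v s) else 0)"
  using mat_apply_embed[of 5 "blk_coord r" "blk_idx r" "qdim (4*l) 1" M v s]
    blk_coord_idx blk_idx_bound[OF assms] blk_idx_image by auto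

lemma mat_apply_swap_out:
  assumes "0 < l"
  shows "mat_apply (qdim (4*l) 1) swap_out v s =
    (if s < qdim (4*l) 1 then (if s = 0 then v 1 else if s = 1 then v 0 else v s) else 0)"
proof -
  have "mat_apply (qdim (4*l) 1) swap_out v s = (if s < qdim (4*l) 1 then
      (if s \<in> id ` {..<2} then (\<Sum>b<2. swap_mat (id s) b * v (id b)) else v s) else 0)"
    unfolding swap_out_def by (rule mat_apply_embed) (use assms in \<open>auto simp: qdim_def\<close>)
  then show ?thesis
    by (auto simp: swap_mat_def numeral_eq_Suc lessThan_Suc less_Suc_eq One_nat_def)
qed

lemma unitary_alg:
  assumes l: "0 < l" and k: "k \<le> 2*l"
  shows "unitary_mat (qdim (4*l) 1) (alg l k)"
proof -
  have UR: "unitary_mat (qdim (4*l) 1) (R_at r)" if "r < l" for r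
    unfolding R_at_def
    by (rule unitary_embed[OF _ _ unitary_gadget_R]) (use blk_coord_idx blk_idx_bound[OF that] in auto)
  have UV: "unitary_mat (qdim (4*l) 1) (V_at r)" if "r < l" for r
    unfolding V_at_def
    by (rule unitary_embed[OF _ _ unitary_gadget_V]) (use blk_coord_idx blk_idx_bound[OF that] in auto)
  have "unitary_mat (qdim (4*l) 1) swap_out"
    unfolding swap_out_def by (rule unitary_embed[OF _ _ unitary_swap_mat]) (use l in \<open>auto simp: qdim_def\<close>)
  then have "unitary_mat (qdim (4*l) 1) (next_R l r)" for r using UR by (simp add: next_R_def)
  then show ?thesis
    using l k UR UV by (auto simp: alg_def intro!: unitary_mat_mult elim!: oddE)
qed

lemma gadget_OVO_at_block:
  assumes r: "r < l" and b: "b < 5"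
    and psi: "\<And>s. \<psi> s = c * block_uniform r s + g s"
    and g: "\<And>s. g s \<noteq> 0 \<Longrightarrow> s \<in> earlier_pos r"
  shows "oracle_apply 1 xs (mat_apply (qdim (4*l) 1) (V_at r) (oracle_apply 1 xs \<psi>)) (blk_idx r b)
       = c * gadget_OVO (block_bits r xs) b"
proof -
  let ?y = "block_bits r xs"
  have g0: "g s = 0" if "s \<notin> earlier_pos r" for s using g that by blast
  have start: "oracle_apply 1 xs \<psi> (blk_idx r a) = c * (if a = 0 then 0 else sg (?y a) / 2)"
    if "a < 5" for a
    using that g0[of "blk_idx r a"] blk_idx_block_pos[of a r] block_pos_not_earlier
      output_pos_not_block oracle_sign_blk_idx[of xs r a]
    by (cases "a = 0") (auto simp: oracle_apply_sign psi block_uniform_def blk_idx_def)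
  have "blk_idx r b = 0 \<or> blk_idx r b \<in> block_pos r" using blk_idx_image b by blast
  then have "mat_apply (qdim (4*l) 1) (V_at r) (oracle_apply 1 xs \<psi>) (blk_idx r b)
      = (\<Sum>a<5. gadget_V b a * oracle_apply 1 xs \<psi> (blk_idx r a))"
    using blk_idx_bound[OF r b] by (simp add: V_at_def mat_apply_at_block[OF r] blk_coord_idx)
  also have "\<dots> = (\<Sum>a<5. c * (gadget_V b a * (if a = 0 then 0 else sg (?y a) / 2)))"
    by (rule sum.cong) (auto simp: start)
  also have "\<dots> = c * gadget_VO ?y b" by (simp add: gadget_VO_def sum_distrib_left)
  finally show ?thesis
    by (simp add: oracle_apply_sign oracle_sign_blk_idx gadget_OVO_def)
qed

text \<open>Hence after R_at r the amplitudes at |0,0> and on block r are c times the gadget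
  output, while the junk is unchanged (the two queries cancel off the gadget).\<close>

lemma gadget_step:
  assumes r: "r < l"
    and psi: "\<And>s. \<psi> s = c * block_uniform r s + g s"
    and g: "\<And>s. g s \<noteq> 0 \<Longrightarrow> s \<in> earlier_pos r"
  shows "mat_apply (qdim (4*l) 1) (R_at r) (oracle_apply 1 xs
           (mat_apply (qdim (4*l) 1) (V_at r) (oracle_apply 1 xs \<psi>))) s
     = (if s = 0 then c * gadget_out (block_bits r xs) 0
        else if s \<in> block_pos r then c * gadget_out (block_bits r xs) (blk_coord r s) else g s)"
proof -
  let ?N = "qdim (4*l) 1" let ?y = "block_bits r xs"
  define p3 where "p3 = oracle_apply 1 xs (mat_apply ?N (V_at r) (oracle_apply 1 xs \<psi>))"
  have g0: "g s = 0" if "s \<notin> earlier_pos r" for s using g that by blast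
  have p3_blk: "p3 (blk_idx r b) = c * gadget_OVO ?y b" if "b < 5" for b
    unfolding p3_def by (rule gadget_OVO_at_block[OF r that psi g])
  show ?thesis
  proof (cases "s < ?N \<and> (s = 0 \<or> s \<in> block_pos r)")
    case True
    have "mat_apply ?N (R_at r) p3 s = (\<Sum>b<5. gadget_R (blk_coord r s) b * p3 (blk_idx r b))"
      using True by (simp add: R_at_def mat_apply_at_block[OF r])
    also have "\<dots> = c * gadget_out ?y (blk_coord r s)"
      by (simp add: p3_blk gadget_out_def sum_distrib_left algebra_simps)
    finally show ?thesis using True by (auto simp: p3_def blk_coord_def)
  next
    case off_block: False
    have outside: "s \<noteq> 0 \<and> s \<notin> block_pos r" if "\<not> s < ?N"
      using that block_pos_bound[OF _ r] by (auto simp: qdim_def)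
    show ?thesis
    proof (cases "s < ?N")
      case True
      then have "mat_apply ?N (R_at r) p3 s = oracle_sign xs s * oracle_sign xs s * \<psi> s"
        using off_block by (simp add: R_at_def V_at_def mat_apply_at_block[OF r] p3_def oracle_apply_sign)
      then show ?thesis
        using off_block True by (simp add: oracle_sign_sq psi block_uniform_def p3_def)
    next
      case False
      then have "g s = 0" using g0[of s] earlier_pos_bound[of s r l] less_imp_le[OF r] by blast
      then show ?thesis
        using outside False by (simp add: R_at_def mat_apply_at_block[OF r] p3_def)
    qed
  qed
qed

lemma R_at_start:
  assumes r: "r < l" and vanish: "\<And>s. s \<in> block_pos r \<Longrightarrow> \<psi> s = 0"
  shows "mat_apply (qdim (4*l) 1) (R_at r) \<psi> s =
    (if s < qdim (4*l) 1 then (if s \<in> block_pos r then \<psi> 0 / 2 else if s = 0 then 0 else \<psi> s) else 0)"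
proof -
  have col0: "(\<Sum>b<5. gadget_R a b * \<psi> (blk_idx r b)) = gadget_R a 0 * \<psi> 0" for a
  proof -
    have "(\<Sum>b<5. gadget_R a b * \<psi> (blk_idx r b)) = (\<Sum>b::nat<5. if b = 0 then gadget_R a 0 * \<psi> 0 else 0)"
      by (rule sum.cong) (use vanish blk_idx_block_pos in \<open>auto simp: blk_idx_def\<close>)
    then show ?thesis by simp
  qed
  have R0: "gadget_R 0 0 = 0" "\<And>a. 0 < a \<Longrightarrow> gadget_R a 0 = 1/2"
    by (simp_all add: gadget_R_def)
  show ?thesis
    using blk_idx_coord[of s r] output_pos_not_block
    by (auto simp: R_at_def mat_apply_at_block[OF r] col0 R0 blk_coord_def)
qed

definition target :: "nat \<Rightarrow> nat \<Rightarrow> nat \<Rightarrow> complex" where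
  "target l r s = (if r < l then block_uniform r s else if s = 1 then 1 else 0)"

lemma next_R_step:
  assumes r: "Suc r \<le> l" and g: "\<And>s. g s \<noteq> 0 \<Longrightarrow> s \<in> earlier_pos (Suc r)"
  shows "mat_apply (qdim (4*l) 1) (next_R l (Suc r)) (\<lambda>s. if s = 0 then c else g s) s
       = c * target l (Suc r) s + g s"
proof -
  let ?N = "qdim (4*l) 1"
  have g0: "g s = 0" if "s \<notin> earlier_pos (Suc r)" for s using g that by blast
  have gN: "g s = 0" if "\<not> s < ?N" for s
    using g0[of s] earlier_pos_bound[OF _ r, of s] that by blast
  show ?thesis
  proof (cases "Suc r < l")
    case True
    let ?p = "\<lambda>s. if s = 0 then c else g s"
    have "?p s = 0" if "s \<in> block_pos (Suc r)" for s
      using g0 block_pos_not_earlier output_pos_not_block that by auto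
    then have "mat_apply ?N (R_at (Suc r)) ?p s
        = (if s < ?N then (if s \<in> block_pos (Suc r) then c / 2 else if s = 0 then 0 else g s) else 0)"
      using R_at_start[OF True, of ?p s] by simp
    then show ?thesis
      using True gN[of s] g0[of s] block_pos_not_earlier[of s "Suc r"] output_pos_not_block
        block_pos_bound[of s "Suc r" l]
      by (auto simp: next_R_def target_def block_uniform_def)
  next
    case False
    then have l: "Suc r = l" using r by simp
    have "1 < ?N" by (simp add: qdim_def)
    then show ?thesis
      using l gN[of s] output_pos_not_block g0[of 0] g0[of 1]
      by (auto simp: next_R_def mat_apply_swap_out target_def)
  qed
qed

text \<open>The invariant after the blocks 0..r-1 have been processed: the state is c times
  the target plus junk g on earlier block positions (output bit 0), where g vanishes if
  all processed blocks are good and c vanishes otherwise.\<close>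

definition blocks_ok :: "nat \<Rightarrow> bool list \<Rightarrow> bool" where
  "blocks_ok r xs = (\<forall>i<r. length (filter id (take 4 (drop (4*i) xs))) = 2)"

definition alg_inv :: "nat \<Rightarrow> bool list \<Rightarrow> nat \<Rightarrow> (nat \<Rightarrow> complex) \<Rightarrow> bool" where
  "alg_inv l xs r \<psi> = (\<exists>c g. (\<forall>s. \<psi> s = c * target l r s + g s)
     \<and> (\<forall>s. g s \<noteq> 0 \<longrightarrow> s \<in> earlier_pos r)
     \<and> (blocks_ok r xs \<longrightarrow> (\<forall>s. g s = 0)) \<and> (\<not> blocks_ok r xs \<longrightarrow> c = 0))"

lemma block_weight:
  assumes "length xs = 4*l" "r < l"
  shows "length (filter id (take 4 (drop (4*r) xs)))
       = length (filter id [block_bits r xs 1, block_bits r xs 2, block_bits r xs 3, block_bits r xs 4])"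
proof -
  have "take 4 (drop (4*r) xs) = [xs!(4*r), xs!(4*r+1), xs!(4*r+2), xs!(4*r+3)]"
    by (rule take4) (use assms in simp)
  moreover have "block_bits r xs 1 = xs!(4*r)" "block_bits r xs 2 = xs!(4*r+1)"
    "block_bits r xs 3 = xs!(4*r+2)" "block_bits r xs 4 = xs!(4*r+3)"
    unfolding block_bits_def by (auto intro!: arg_cong[where f="(!) xs"])
  ultimately show ?thesis by (simp only:)
qed

lemma alg_inv_base:
  assumes l: "0 < l"
  shows "alg_inv l xs 0 (mat_apply (qdim (4*l) 1) (R_at 0) basis0)"
proof -
  have vanish: "\<And>s. s \<in> block_pos 0 \<Longrightarrow> basis0 s = 0"
    unfolding basis0_def using output_pos_not_block(3) by metis
  have "mat_apply (qdim (4*l) 1) (R_at 0) basis0 s = 1 * target l 0 s + 0" for s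
    using R_at_start[OF l vanish, where s = s] l block_pos_bound[of s 0 l]
    by (auto simp: basis0_def target_def block_uniform_def)
  then show ?thesis unfolding alg_inv_def
    by (intro exI[of _ 1] exI[of _ "\<lambda>_. 0"]) (simp add: blocks_ok_def)
qed

lemma alg_inv_step:
  assumes r: "Suc r \<le> l" and len: "length xs = 4*l" and inv: "alg_inv l xs r \<psi>"
  shows "alg_inv l xs (Suc r) (mat_apply (qdim (4*l) 1) (mat_mult (qdim (4*l) 1) (next_R l (Suc r)) (R_at r))
           (oracle_apply 1 xs (mat_apply (qdim (4*l) 1) (V_at r) (oracle_apply 1 xs \<psi>))))"
proof -
  let ?N = "qdim (4*l) 1" let ?y = "block_bits r xs"
  have rl: "r < l" using r by simp
  obtain c g where psi: "\<And>s. \<psi> s = c * target l r s + g s"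
    and g: "\<And>s. g s \<noteq> 0 \<Longrightarrow> s \<in> earlier_pos r"
    and g_ok: "blocks_ok r xs \<Longrightarrow> g s = 0" and c_bad: "\<not> blocks_ok r xs \<Longrightarrow> c = 0" for s
    using inv unfolding alg_inv_def by blast
  define c' where "c' = c * gadget_out ?y 0"
  define g' where "g' s = (if s \<in> block_pos r then c * gadget_out ?y (blk_coord r s) else g s)" for s
  have g'_supp: "s \<in> earlier_pos (Suc r)" if "g' s \<noteq> 0" for s
    using that g[of s] earlier_pos_Suc[of s r] by (auto simp: g'_def split: if_splits)
  have psi': "\<psi> s = c * block_uniform r s + g s" for s using psi rl by (simp add: target_def)
  have "g 0 = 0" using g output_pos_not_block by blast
  then have block: "mat_apply ?N (R_at r) (oracle_apply 1 xs (mat_apply ?N (V_at r) (oracle_apply 1 xs \<psi>)))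
      = (\<lambda>s. if s = 0 then c' else g' s)"
    by (auto simp: gadget_step[OF rl psi' g] c'_def g'_def)
  show ?thesis unfolding alg_inv_def
  proof (intro exI conjI allI impI)
    show "mat_apply ?N (mat_mult ?N (next_R l (Suc r)) (R_at r))
            (oracle_apply 1 xs (mat_apply ?N (V_at r) (oracle_apply 1 xs \<psi>))) s = c' * target l (Suc r) s + g' s" for s
      using next_R_step[OF r g'_supp] by (simp add: mat_apply_mult block)
    show "s \<in> earlier_pos (Suc r)" if "g' s \<noteq> 0" for s using g'_supp that .
  next
    assume ok: "blocks_ok (Suc r) xs"
    then have "blocks_ok r xs" and "length (filter id (take 4 (drop (4*r) xs))) = 2"
      by (auto simp: blocks_ok_def)
    then show "g' s = 0" for s
      using g_ok gadget_out_good[of ?y "blk_coord r s"] blk_idx_coord[of s r] block_weight[OF len rl]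
      by (auto simp: g'_def)
  next
    assume bad: "\<not> blocks_ok (Suc r) xs"
    show "c' = 0"
    proof (cases "blocks_ok r xs")
      case True
      then have "length (filter id (take 4 (drop (4*r) xs))) \<noteq> 2"
        using bad by (auto simp: blocks_ok_def less_Suc_eq)
      then show ?thesis using gadget_out_bad block_weight[OF len rl] by (simp add: c'_def)
    next
      case False then show ?thesis using c_bad by (simp add: c'_def)
    qed
  qed
qed

lemma alg_inv_qstate:
  assumes l: "0 < l" and len: "length xs = 4*l" and r: "r \<le> l"
  shows "alg_inv l xs r (qstate (4*l) 1 (alg l) xs (2*r))"
  using r
proof (induction r)
  case 0
  then show ?case using alg_inv_base[OF l] by (simp add: alg_def)
next
  case (Suc r)
  have "alg l (Suc (2*r)) = V_at r"
    and "alg l (Suc (Suc (2*r))) = mat_mult (qdim (4*l) 1) (next_R l (Suc r)) (R_at r)"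
    by (simp_all add: alg_def)
  moreover have "2 * Suc r = Suc (Suc (2*r))" by simp
  ultimately show ?case using alg_inv_step[OF Suc.prems len Suc.IH] Suc.prems
    by (simp only: qstate.simps)
qed

lemma alg_computes_exact2:
  assumes l: "0 < l"
  shows "computes_exactly (4*l) 1 (2*l) (alg l) (exact2 l)"
  unfolding computes_exactly_def
proof (intro allI impI)
  fix xs s assume len: "length xs = 4*l" and "s < qdim (4*l) 1" and wrong: "(s mod 2 = 1) \<noteq> exact2 l xs"
  obtain c g where psi: "\<And>s. qstate (4*l) 1 (alg l) xs (2*l) s = c * target l l s + g s"
    and g: "\<And>s. g s \<noteq> 0 \<Longrightarrow> s \<in> earlier_pos l"
    and g_ok: "blocks_ok l xs \<Longrightarrow> g s = 0" and c_bad: "\<not> blocks_ok l xs \<Longrightarrow> c = 0" for s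
    using alg_inv_qstate[OF l len order_refl] unfolding alg_inv_def by blast
  have ex: "exact2 l xs = blocks_ok l xs" by (simp add: exact2_def blocks_ok_def)
  show "qstate (4*l) 1 (alg l) xs (2*l) s = 0"
  proof (cases "blocks_ok l xs")
    case True
    then show ?thesis using wrong ex g_ok[OF True] by (auto simp: psi target_def)
  next
    case False
    then have "s \<notin> earlier_pos l" using wrong ex by (auto simp: earlier_pos_def)
    then show ?thesis using c_bad[OF False] g[of s] by (auto simp: psi)
  qed
qed

end

theorem theorem3p2:
  fixes l :: nat
  assumes "1 \<le> l"
  shows "Q_E (4 * l) (exact2 l) = 2 * l \<and> D (4 * l) (exact2 l) = 4 * l"
proof
  have l: "0 < l" using assms by simp
  show "Q_E (4 * l) (exact2 l) = 2 * l"
    unfolding Q_E_def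
  proof (rule Least_equality)
    show "\<exists>w U. 0 < w \<and> (\<forall>k\<le>2 * l. unitary_mat (qdim (4 * l) w) (U k))
                \<and> computes_exactly (4 * l) w (2 * l) U (exact2 l)"
      using unitary_alg[OF l] alg_computes_exact2[OF l] by blast
  qed (use exact2_query_lower_bound in blast)
  show "D (4 * l) (exact2 l) = 4 * l"
    using D_full_sensitivity[OF balanced_input_length] balanced_input_sensitive exact2_balanced_input
    by blast
qed
end
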